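(* For all agents $a$, messages $M,M'$ and formulas $\phi,\psi$, the following formulas are valid: (1) $\mathsf{k}_a(a)$; (2) $(\mathsf{k}_a(M)\wedge\mathsf{k}_a(M'))\leftrightarrow\mathsf{k}_a((M,M'))$; (3) $[M]\mathsf{k}_{\mathsf{CM}}(M)$; (4) $[M](\phi\to\psi)\to([M]\phi\to[M]\psi)$; (5) $[M]\phi\to(\mathsf{k}_{\mathsf{CM}}(M)\to\phi)$; (6) $[M]\phi\to\langle M\rangle\phi$; (7) $\phi\to[M]\phi$. Moreover (8) if $\phi$ is valid then $[M]\phi$ is valid, and (9) if $\mathsf{k}_{\mathsf{CM}}(M)\to\mathsf{k}_{\mathsf{CM}}(M')$ is valid then $[M']\phi\to[M]\phi$ is valid.
   Context: Syntax. Fix a finite set $\mathcal{A}$ of agent names containing a distinguished name $\mathsf{CM}$. Messages: $M ::= a \mid B \mid (M,M)$ ($a\in\mathcal{A}$, $B$ optional data constants, pairs). $\mathcal{P}$ is a denumerable set of propositional variables containing atoms $\mathsf{k}_a(M)$. Formulas: $\phi ::= P \mid \phi\wedge\phi \mid \phi\vee\phi \mid \neg\phi \mid \phi\to\phi \mid [M]\phi$. Abbreviations: $\phi\leftrightarrow\psi:=(\phi\to\psi)\wedge(\psi\to\phi)$, $\langle M\rangle\phi:=\neg\neg(\mathsf{k}_{\mathsf{CM}}(M)\wedge\phi)$. Semantics. An LIiP-model is $(\mathcal{S},\sqsubseteq,\{R_M\}_M,\{D_a\}_{a\in\mathcal{A}},\mathcal{V})$ with $\mathcal{S}$ a nonempty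 set of states, $\sqsubseteq$ a partial order, $D_a(s)$ a set of messages per agent and state, $\mathrm{cl}_a(s)$ the smallest set of messages containing $a$ and $D_a(s)$ closed under pairing and taking components of pairs. $\mathcal{V}:\mathcal{P}\to 2^{\mathcal{S}}$ satisfies $\mathcal{V}(\mathsf{k}_a(M))=\{s: M\in\mathrm{cl}_a(s)\}$ and is upward closed along $\sqsubseteq$. $M\preceq M'$ iff for all $s$, $M\in\mathrm{cl}_{\mathsf{CM}}(s)$ implies $M'\in\mathrm{cl}_{\mathsf{CM}}(s)$. The $R_M$ satisfy: (i) $sR_Ms'$ implies $M\in\mathrm{cl}_{\mathsf{CM}}(s')$; (ii) $M\in\mathrm{cl}_{\mathsf{CM}}(s)$ implies $sR_Ms$; (iii) every $s$ has some $s'$ with $sR_Ms'$; (iv) $R_M\subseteq R_{\mathsf{CM}}={\sqsubseteq}$; (v) $sR_{\mathsf{CM}}t$ and $tR_Mu$ imply $sR_Mu$; (vi) $M\preceq M'$ implies $R_M\subseteq R_{M'}$. Satisfaction: atoms via $\mathcal{V}$; $\wedge,\vee$ classically; $s\models\neg\phi$ iff no $s'\sqsupseteq s$ satisfies $\phi$; $s\models\phi\to\psi$ iff every $s'\sqsupseteq s$ satisfying $\phi$ satisfies $\psi$; $s\models[M]\phi$ iff every $s'$ with $sR_Ms'$ satisfies $\phi$. Valid: true at every state of every LIiP-model. *)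

theory Defs
  imports Main
begin

datatype ('ag, 'b) msg = Ag 'ag | Dat 'b | MPair "('ag, 'b) msg" "('ag, 'b) msg"

text \<open>Formulas. Propositional variables are either the atoms k_a(M) (constructor K)
  or other propositional variables of type 'p.\<close>
datatype ('ag, 'b, 'p) form =
    PVar 'p
  | K 'ag "('ag, 'b) msg"
  | FAnd "('ag, 'b, 'p) form" "('ag, 'b, 'p) form"
  | FOr "('ag, 'b, 'p) form" "('ag, 'b, 'p) form"
  | FNeg "('ag, 'b, 'p) form"
  | FImp "('ag, 'b, 'p) form" "('ag, 'b, 'p) form"
  | Box "('ag, 'b) msg" "('ag, 'b, 'p) form"

definition FIff :: "('ag, 'b, 'p) form \<Rightarrow> ('ag, 'b, 'p) form \<Rightarrow> ('ag, 'b, 'p) form" where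
  "FIff \<phi> \<psi> = FAnd (FImp \<phi> \<psi>) (FImp \<psi> \<phi>)"

text \<open>Diamond, with the distinguished agent cm (= CM) as parameter.\<close>
definition Dia :: "'ag \<Rightarrow> ('ag, 'b) msg \<Rightarrow> ('ag, 'b, 'p) form \<Rightarrow> ('ag, 'b, 'p) form" where
  "Dia cm M \<phi> = FNeg (FNeg (FAnd (K cm M) \<phi>))"

text \<open>LIiP-model structure; the state set is the universe of type 's.\<close>
record ('s, 'ag, 'b, 'p) liip =
  le  :: "'s \<Rightarrow> 's \<Rightarrow> bool"
  rel :: "('ag, 'b) msg \<Rightarrow> 's \<Rightarrow> 's \<Rightarrow> bool"
  dom :: "'ag \<Rightarrow> 's \<Rightarrow> ('ag, 'b) msg set"
  val :: "'p \<Rightarrow> 's set"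

inductive_set cl :: "('s, 'ag, 'b, 'p) liip \<Rightarrow> 'ag \<Rightarrow> 's \<Rightarrow> ('ag, 'b) msg set"
  for m :: "('s, 'ag, 'b, 'p) liip" and a :: 'ag and s :: 's where
  cl_self: "Ag a \<in> cl m a s"
| cl_dom: "M \<in> dom m a s \<Longrightarrow> M \<in> cl m a s"
| cl_pair: "M \<in> cl m a s \<Longrightarrow> M' \<in> cl m a s \<Longrightarrow> MPair M M' \<in> cl m a s"
| cl_fst: "MPair M M' \<in> cl m a s \<Longrightarrow> M \<in> cl m a s"
| cl_snd: "MPair M M' \<in> cl m a s \<Longrightarrow> M' \<in> cl m a s"

definition msg_le :: "'ag \<Rightarrow> ('s, 'ag, 'b, 'p) liip \<Rightarrow> ('ag, 'b) msg \<Rightarrow> ('ag, 'b) msg \<Rightarrow> bool" where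
  "msg_le cm m M M' \<longleftrightarrow> (\<forall>s. M \<in> cl m cm s \<longrightarrow> M' \<in> cl m cm s)"

definition is_liip :: "'ag \<Rightarrow> ('s, 'ag, 'b, 'p) liip \<Rightarrow> bool" where
  "is_liip cm m \<longleftrightarrow>
     \<comment> \<open>partial order\<close>
     (\<forall>s. le m s s) \<and>
     (\<forall>s t u. le m s t \<longrightarrow> le m t u \<longrightarrow> le m s u) \<and>
     (\<forall>s t. le m s t \<longrightarrow> le m t s \<longrightarrow> s = t) \<and>
     \<comment> \<open>valuation upward closed (for all atoms, including k_a(M))\<close>
     (\<forall>p s t. s \<in> val m p \<longrightarrow> le m s t \<longrightarrow> t \<in> val m p) \<and>
     (\<forall>a M s t. M \<in> cl m a s \<longrightarrow> le m s t \<longrightarrow> M \<in> cl m a t) \<and>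
     \<comment> \<open>(i)-(vi)\<close>
     (\<forall>M s s'. rel m M s s' \<longrightarrow> M \<in> cl m cm s') \<and>
     (\<forall>M s. M \<in> cl m cm s \<longrightarrow> rel m M s s) \<and>
     (\<forall>M s. \<exists>s'. rel m M s s') \<and>
     (\<forall>M s t. rel m M s t \<longrightarrow> le m s t) \<and>
     rel m (Ag cm) = le m \<and>
     (\<forall>M s t u. rel m (Ag cm) s t \<longrightarrow> rel m M t u \<longrightarrow> rel m M s u) \<and>
     (\<forall>M M'. msg_le cm m M M' \<longrightarrow> (\<forall>s t. rel m M s t \<longrightarrow> rel m M' s t))"

fun sat :: "'ag \<Rightarrow> ('s, 'ag, 'b, 'p) liip \<Rightarrow> 's \<Rightarrow> ('ag, 'b, 'p) form \<Rightarrow> bool" where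
  "sat cm m s (PVar p) \<longleftrightarrow> s \<in> val m p"
| "sat cm m s (K a M) \<longleftrightarrow> M \<in> cl m a s"
| "sat cm m s (FAnd \<phi> \<psi>) \<longleftrightarrow> sat cm m s \<phi> \<and> sat cm m s \<psi>"
| "sat cm m s (FOr \<phi> \<psi>) \<longleftrightarrow> sat cm m s \<phi> \<or> sat cm m s \<psi>"
| "sat cm m s (FNeg \<phi>) \<longleftrightarrow> (\<forall>s'. le m s s' \<longrightarrow> \<not> sat cm m s' \<phi>)"
| "sat cm m s (FImp \<phi> \<psi>) \<longleftrightarrow> (\<forall>s'. le m s s' \<longrightarrow> sat cm m s' \<phi> \<longrightarrow> sat cm m s' \<psi>)"
| "sat cm m s (Box M \<phi>) \<longleftrightarrow> (\<forall>s'. rel m M s s' \<longrightarrow> sat cm m s' \<phi>)"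

definition valid :: "'s itself \<Rightarrow> 'ag \<Rightarrow> ('ag, 'b, 'p) form \<Rightarrow> bool" where
  "valid _ cm \<phi> \<longleftrightarrow> (\<forall>m :: ('s, 'ag, 'b, 'p) liip. is_liip cm m \<longrightarrow> (\<forall>s. sat cm m s \<phi>))"

end

theory Submission
  imports Defs
begin

text \<open>The intuitionistic
  implication costs nothing because satisfaction is persistent along the order (the
  valuation is upward closed and, by condition (v), so are the boxes). The modal items
  then come from the conditions on the relations: (i) gives item 3, (ii) item 5,
  (iii) with (v) item 6, (iv) with persistence item 7, and (vi) item 9, since validity
  of the implication between the two atoms is exactly the message order.\<close>

context
  fixes cm and m :: "('s, 'ag, 'b, 'p) liip"
  assumes liip: "is_liip cm m"
begin

lemma liip_le_refl: "le m s s"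
  using liip unfolding is_liip_def by meson

lemma liip_le_trans: "le m s t \<Longrightarrow> le m t u \<Longrightarrow> le m s u"
  using liip unfolding is_liip_def by meson

lemma liip_val_mono: "s \<in> val m p \<Longrightarrow> le m s t \<Longrightarrow> t \<in> val m p"
  using liip unfolding is_liip_def by meson

lemma liip_cl_mono: "M \<in> cl m a s \<Longrightarrow> le m s t \<Longrightarrow> M \<in> cl m a t"
  using liip unfolding is_liip_def by meson

lemma liip_rel_cl: "rel m M s t \<Longrightarrow> M \<in> cl m cm t"
  using liip unfolding is_liip_def by meson

lemma liip_rel_refl: "M \<in> cl m cm s \<Longrightarrow> rel m M s s"
  using liip unfolding is_liip_def by meson

lemma liip_rel_serial: "\<exists>t. rel m M s t"
  using liip unfolding is_liip_def by meson

lemma liip_rel_le: "rel m M s t \<Longrightarrow> le m s t"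
  using liip unfolding is_liip_def by meson

lemma liip_rel_antimono: "msg_le cm m M M' \<Longrightarrow> rel m M s t \<Longrightarrow> rel m M' s t"
  using liip unfolding is_liip_def by meson

lemma liip_le_rel: "le m s t \<Longrightarrow> rel m M t u \<Longrightarrow> rel m M s u"
  using liip unfolding is_liip_def by metis

lemma sat_persistent:
  assumes "sat cm m s \<phi>" "le m s t"
  shows "sat cm m t \<phi>"
  using assms
proof (induction \<phi> arbitrary: s t)
  case PVar thus ?case using liip_val_mono by simp
next
  case K thus ?case using liip_cl_mono by simp
next
  case FAnd thus ?case by (simp only: sat.simps) blast
next
  case FOr thus ?case by (simp only: sat.simps) blast
next
  case FNeg thus ?case using liip_le_trans by (simp only: sat.simps) blast
next
  case FImp thus ?case using liip_le_trans by (simp only: sat.simps) blast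
next
  case Box thus ?case using liip_le_rel by (simp only: sat.simps) blast
qed

lemma sat_Box_FImp_mp:
  assumes "sat cm m s (Box M (FImp \<phi> \<psi>))" "sat cm m s (Box M \<phi>)"
  shows "sat cm m s (Box M \<psi>)"
  using assms liip_le_refl by auto

lemma sat_Box_if_K:
  assumes "sat cm m s (Box M \<phi>)" "M \<in> cl m cm s"
  shows "sat cm m s \<phi>"
  using assms liip_rel_refl by auto

lemma sat_Box_imp_Dia:
  assumes box: "sat cm m s (Box M \<phi>)"
  shows "sat cm m s (Dia cm M \<phi>)"
proof -
  have "\<exists>v. le m u v \<and> M \<in> cl m cm v \<and> sat cm m v \<phi>" if "le m s u" for u
  proof -
    obtain v where uv: "rel m M u v" using liip_rel_serial by blast
    have "sat cm m v \<phi>" using box liip_le_rel[OF that uv] by simp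
    with uv show ?thesis using liip_rel_le liip_rel_cl by blast
  qed
  then show ?thesis unfolding Dia_def by simp
qed

lemma sat_Box_if_sat:
  assumes "sat cm m s \<phi>"
  shows "sat cm m s (Box M \<phi>)"
  using assms sat_persistent liip_rel_le by auto

lemma sat_Box_antimono:
  assumes "msg_le cm m M M'" "sat cm m s (Box M' \<phi>)"
  shows "sat cm m s (Box M \<phi>)"
  using assms liip_rel_antimono by auto

end

lemma cl_MPair_iff: "MPair M M' \<in> cl m a s \<longleftrightarrow> M \<in> cl m a s \<and> M' \<in> cl m a s"
  by (auto intro: cl.cl_pair dest: cl.cl_fst cl.cl_snd)

lemma valid_FImpI:
  assumes "\<And>m :: ('s, 'ag, 'b, 'p) liip. \<And>s. is_liip cm m \<Longrightarrow> sat cm m s \<phi> \<Longrightarrow> sat cm m s \<psi>"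
  shows "valid TYPE('s) cm (FImp \<phi> \<psi>)"
  using assms unfolding valid_def by simp

lemma valid_FImp_FImpI:
  assumes "\<And>m :: ('s, 'ag, 'b, 'p) liip. \<And>s.
      is_liip cm m \<Longrightarrow> sat cm m s \<phi> \<Longrightarrow> sat cm m s \<psi> \<Longrightarrow> sat cm m s \<chi>"
  shows "valid TYPE('s) cm (FImp \<phi> (FImp \<psi> \<chi>))"
  unfolding valid_def
proof (intro allI impI)
  fix m :: "('s, 'ag, 'b, 'p) liip" and s
  assume liip: "is_liip cm m"
  have "sat cm m u \<chi>" if "sat cm m t \<phi>" "le m t u" "sat cm m u \<psi>" for t u
    using assms[OF liip sat_persistent[OF liip that(1,2)] that(3)] .
  then show "sat cm m s (FImp \<phi> (FImp \<psi> \<chi>))" by auto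
qed

lemma valid_FImp_D:
  fixes m :: "('s, 'ag, 'b, 'p) liip"
  assumes "valid TYPE('s) cm (FImp \<phi> \<psi>)" "is_liip cm m" "sat cm m s \<phi>"
  shows "sat cm m s \<psi>"
  using assms liip_le_refl[OF assms(2)] unfolding valid_def by auto

text \<open>The premise of item 9 is a formula over its own type of propositional variables.
  Its atoms do not depend on the valuation, so it can be evaluated in a copy of the model
  with the valuation discarded.\<close>

definition drop_val :: "('s, 'ag, 'b, 'p) liip \<Rightarrow> ('s, 'ag, 'b, 'q) liip" where
  "drop_val m = \<lparr>le = le m, rel = rel m, dom = dom m, val = (\<lambda>_. {})\<rparr>"

lemma cl_subset_if_dom_eq:
  assumes "M \<in> cl m1 a s" "dom m1 = dom m2"
  shows "M \<in> cl m2 a s"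
  using assms(1)
  by induction (auto simp: assms(2) intro: cl.cl_self cl.cl_dom cl.cl_pair dest: cl.cl_fst cl.cl_snd)

lemma cl_drop_val: "cl (drop_val m) = cl m"
  by (intro ext set_eqI iffI) (simp_all add: cl_subset_if_dom_eq drop_val_def)

lemma is_liip_drop_val:
  assumes "is_liip cm m"
  shows "is_liip cm (drop_val m)"
proof -
  have drop_val_sel:
      "le (drop_val m) = le m" "rel (drop_val m) = rel m" "val (drop_val m) = (\<lambda>_. {})"
    by (simp_all add: drop_val_def)
  have msg_le_drop_val: "msg_le cm (drop_val m) = msg_le cm m"
    unfolding msg_le_def cl_drop_val ..
  from assms show ?thesis
    unfolding is_liip_def cl_drop_val drop_val_sel msg_le_drop_val
    by (elim conjE) (intro conjI; (assumption | blast))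
qed

lemma msg_le_if_valid_FImp_K:
  fixes m :: "('s, 'ag, 'b, 'p) liip"
  assumes valid: "valid TYPE('s) cm (FImp (K cm M :: ('ag, 'b, 'q) form) (K cm M'))"
    and liip: "is_liip cm m"
  shows "msg_le cm m M M'"
proof -
  have "is_liip cm (drop_val m :: ('s, 'ag, 'b, 'q) liip)"
    using is_liip_drop_val[OF liip] .
  from valid_FImp_D[OF valid this] show ?thesis
    unfolding msg_le_def by (simp add: cl_drop_val)
qed

theorem proposition4:
  fixes cm a :: "'ag::finite" and M M' :: "('ag, 'b) msg"
    and \<phi> \<psi> :: "('ag, 'b, 'p) form"
  shows "valid TYPE('s) cm (K a (Ag a)) \<and>
    valid TYPE('s) cm (FIff (FAnd (K a M) (K a M')) (K a (MPair M M'))) \<and>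
    valid TYPE('s) cm (Box M (K cm M)) \<and>
    valid TYPE('s) cm (FImp (Box M (FImp \<phi> \<psi>)) (FImp (Box M \<phi>) (Box M \<psi>))) \<and>
    valid TYPE('s) cm (FImp (Box M \<phi>) (FImp (K cm M) \<phi>)) \<and>
    valid TYPE('s) cm (FImp (Box M \<phi>) (Dia cm M \<phi>)) \<and>
    valid TYPE('s) cm (FImp \<phi> (Box M \<phi>)) \<and>
    (valid TYPE('s) cm \<phi> \<longrightarrow> valid TYPE('s) cm (Box M \<phi>)) \<and>
    (valid TYPE('s) cm (FImp (K cm M) (K cm M')) \<longrightarrow>
       valid TYPE('s) cm (FImp (Box M' \<phi>) (Box M \<phi>)))"
proof (intro conjI impI)
  show "valid TYPE('s) cm (K a (Ag a))"
    unfolding valid_def by (simp add: cl.cl_self)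
  show "valid TYPE('s) cm (FIff (FAnd (K a M) (K a M')) (K a (MPair M M')))"
    unfolding FIff_def valid_def by (simp add: cl_MPair_iff)
  show "valid TYPE('s) cm (Box M (K cm M))"
    unfolding valid_def by (simp add: liip_rel_cl)
  show "valid TYPE('s) cm (FImp (Box M (FImp \<phi> \<psi>)) (FImp (Box M \<phi>) (Box M \<psi>)))"
    by (rule valid_FImp_FImpI) (rule sat_Box_FImp_mp)
  show "valid TYPE('s) cm (FImp (Box M \<phi>) (FImp (K cm M) \<phi>))"
    by (rule valid_FImp_FImpI) (simp add: sat_Box_if_K)
  show "valid TYPE('s) cm (FImp (Box M \<phi>) (Dia cm M \<phi>))"
    by (rule valid_FImpI) (rule sat_Box_imp_Dia)
  show "valid TYPE('s) cm (FImp \<phi> (Box M \<phi>))"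
    by (rule valid_FImpI) (rule sat_Box_if_sat)
  show "valid TYPE('s) cm (Box M \<phi>)" if "valid TYPE('s) cm \<phi>"
    using that unfolding valid_def by simp
  show "valid TYPE('s) cm (FImp (Box M' \<phi>) (Box M \<phi>))"
    if "valid TYPE('s) cm (FImp (K cm M) (K cm M'))"
  proof (rule valid_FImpI)
    fix m :: "('s, 'ag, 'b, 'p) liip" and s
    assume liip: "is_liip cm m" and box: "sat cm m s (Box M' \<phi>)"
    show "sat cm m s (Box M \<phi>)"
      by (rule sat_Box_antimono[OF liip msg_le_if_valid_FImp_K[OF that liip] box])
  qed
qed

end
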